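(* For any integers $k, m \ge 1$, \[ B(k,m) = \sum_{a=1}^{2k-m-1}\left[\binom{m}{k-a} - \binom{m}{k}\right] \] (an empty sum being $0$). Consequently, for $2 \le k \le m$, the number of Grassmannian permutations of $[m]$ avoiding $\operatorname{id}_k=12\cdots k$ equals this sum.
   Context: For $k \ge 1$ and $m \ge 0$, $B(k,m)$ is the number of binary words of length $m$ that avoid (i.e. do not contain as a not-necessarily-contiguous subsequence) every word $0^j1^{k-j}$ for $j \in \{0,1,\dots,k\}$. A permutation is Grassmannian if it has at most one descent; pattern containment/avoidance is the usual notion for permutations. Binomial coefficients $\binom{p}{q}$ are $0$ when $q<0$ or $q>p$. *)

theory Defs
  imports Main "HOL-Library.Sublist"
begin

text \<open>Binary words are lists of booleans; the letter 0 is False and 1 is True.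
  Containment as a (not necessarily contiguous) subsequence is Sublist.subseq.\<close>

definition B :: "nat \<Rightarrow> nat \<Rightarrow> nat" where
  "B k m = card {w :: bool list. length w = m \<and>
     (\<forall>j \<in> {0..k}. \<not> subseq (replicate j False @ replicate (k - j) True) w)}"

text \<open>Binomial coefficient with integer lower index, zero when the lower index is negative
  (and, via choose, zero when it exceeds the upper index).\<close>

definition binom_int :: "nat \<Rightarrow> int \<Rightarrow> int" where
  "binom_int p q = (if q < 0 then 0 else int (p choose nat q))"

definition is_perm :: "nat \<Rightarrow> nat list \<Rightarrow> bool" where
  "is_perm m p \<longleftrightarrow> length p = m \<and> distinct p \<and> set p = {1..m}"

definition descents :: "nat list \<Rightarrow> nat set" where
  "descents p = {i. Suc i < length p \<and> p ! i > p ! Suc i}"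

definition grassmannian :: "nat list \<Rightarrow> bool" where
  "grassmannian p \<longleftrightarrow> card (descents p) \<le> 1"

definition contains_pattern :: "nat list \<Rightarrow> nat list \<Rightarrow> bool" where
  "contains_pattern p \<sigma> \<longleftrightarrow> (\<exists>q. subseq q p \<and> length q = length \<sigma> \<and>
     (\<forall>i < length \<sigma>. \<forall>j < length \<sigma>. q ! i < q ! j \<longleftrightarrow> \<sigma> ! i < \<sigma> ! j))"

definition avoids :: "nat list \<Rightarrow> nat list \<Rightarrow> bool" where
  "avoids p \<sigma> \<longleftrightarrow> \<not> contains_pattern p \<sigma>"

definition id_perm :: "nat \<Rightarrow> nat list" where
  "id_perm k = [1..<Suc k]"

end

theory Submission
  imports Defs
begin

text \<open>A binary word avoids every pattern \<open>0^j 1^(k-j)\<close> exactly when its longest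
  subsequence of that shape is shorter than \<open>k\<close>. Classifying the words of length \<open>m\<close> by
  their number \<open>z\<close> of zeros and splitting off the first letter, the number of avoiders
  satisfies Pascal's recursion, which identifies it as \<open>C(m,z) - C(m,k)\<close> when
  \<open>z < k\<close> and \<open>m - z < k\<close> and as \<open>0\<close> otherwise; summing over \<open>z = k - a\<close> gives
  the formula for \<open>B(k,m)\<close>.

  A word is sent to the permutation listing the positions of its zeros followed by the
  positions of its ones. Every Grassmannian permutation arises this way, the map is
  injective on words that are not of the form \<open>0\<dots>01\<dots>1\<close> (the descent sits after the
  last zero), and an increasing subsequence of length \<open>k\<close> of the image is the same as an
  occurrence of some \<open>0^j 1^(k-j)\<close> in the word. Avoiders of length \<open>m \<ge> k\<close> are never
  of the form \<open>0\<dots>01\<dots>1\<close>, so the two counts agree.\<close>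

lemma subseq_replicate_iff: "subseq (replicate n x) w \<longleftrightarrow> n \<le> count_list w x"
proof (induction w arbitrary: n)
  case (Cons y w)
  show ?case
  proof (cases n)
    case (Suc n')
    then show ?thesis using Cons.IH[of n'] Cons.IH[of n] by (cases "x = y") simp_all
  qed simp
qed (auto dest: list_emb_Nil2)

lemma set_mono_subseq: "subseq xs ys \<Longrightarrow> set xs \<subseteq> set ys"
  by (auto elim: list_emb_set)

lemma subseq_filter_if_all: "\<forall>x\<in>set xs. P x \<Longrightarrow> subseq xs ys \<Longrightarrow> subseq xs (filter P ys)"
  using subseq_filter[of xs ys P] by simp

lemma map_eq_replicate_iff: "map f xs = replicate (length xs) c \<longleftrightarrow> (\<forall>x\<in>set xs. f x = c)"
  by (induction xs) auto

lemma count_list_True_eq: "count_list w True = length w - count_list w False"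
  by (induction w) (auto simp: Suc_diff_le count_le_length)

lemma sorted_le_last: "sorted xs \<Longrightarrow> x \<in> set xs \<Longrightarrow> x \<le> last xs"
  by (induction xs) auto

lemma sorted_hd_le: "sorted xs \<Longrightarrow> x \<in> set xs \<Longrightarrow> hd xs \<le> x"
  by (cases xs) auto

lemma sorted_wrt_less_nth_less_iff:
  fixes xs :: "'a::linorder list"
  shows "sorted_wrt (<) xs \<Longrightarrow> i < length xs \<Longrightarrow> j < length xs \<Longrightarrow> xs ! i < xs ! j \<longleftrightarrow> i < j"
  using sorted_wrt_nth_less[of "(<)" xs i j] sorted_wrt_nth_less[of "(<)" xs j i]
  by (cases i j rule: linorder_cases) auto

section \<open>Split patterns in binary words\<close>

definition split_pattern :: "nat \<Rightarrow> nat \<Rightarrow> bool list" where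
  "split_pattern j k = replicate j False @ replicate (k - j) True"

lemma split_pattern_0: "split_pattern 0 k = replicate k True"
  by (simp add: split_pattern_def)

lemma split_pattern_Suc: "j \<le> k \<Longrightarrow> split_pattern (Suc j) (Suc k) = False # split_pattern j k"
  by (simp add: split_pattern_def)

fun max_split :: "bool list \<Rightarrow> nat" where
  "max_split [] = 0"
| "max_split (False # w) = Suc (max_split w)"
| "max_split (True # w) = max (Suc (count_list w True)) (max_split w)"

lemma count_True_le_max_split: "count_list w True \<le> max_split w"
  by (induction w rule: max_split.induct) auto

lemma contains_split_pattern_iff:
  "(\<exists>j\<le>k. subseq (split_pattern j k) w) \<longleftrightarrow> k \<le> max_split w"
proof (induction w arbitrary: k)
  case Nil
  then show ?case by (cases k) (auto simp: split_pattern_def dest: list_emb_Nil2)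
next
  case (Cons x w)
  have split_j: "(\<exists>j\<le>k. P j) \<longleftrightarrow> P 0 \<or> (\<exists>j<k. P (Suc j))" for P
    by (metis Suc_le_eq le0 not0_implies_Suc)
  have ones: "subseq (split_pattern 0 k) v \<longleftrightarrow> k \<le> count_list v True" for v
    by (simp add: split_pattern_0 subseq_replicate_iff)
  show ?case
  proof (cases x)
    case False
    have "(\<exists>j<k. subseq (split_pattern (Suc j) k) (x # w)) \<longleftrightarrow> 0 < k \<and> k - 1 \<le> max_split w"
      using Cons.IH[of "k - 1"] False by (cases k) (auto simp: split_pattern_Suc less_Suc_eq_le cong: conj_cong)
    then show ?thesis
      using split_j ones False count_True_le_max_split[of w] by auto
  next
    case True
    have "(\<exists>j<k. subseq (split_pattern (Suc j) k) (x # w)) \<longleftrightarrow>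
        (\<exists>j<k. subseq (split_pattern (Suc j) k) w)"
      using True by (simp add: split_pattern_def)
    then have "(\<exists>j\<le>k. subseq (split_pattern j k) (x # w)) \<longleftrightarrow>
        k \<le> Suc (count_list w True) \<or> (\<exists>j<k. subseq (split_pattern (Suc j) k) w)"
      using split_j ones True by simp
    also have "\<dots> \<longleftrightarrow> k \<le> Suc (count_list w True) \<or> (\<exists>j\<le>k. subseq (split_pattern j k) w)"
      using split_j[of "\<lambda>j. subseq (split_pattern j k) w"] ones by auto
    finally show ?thesis
      using Cons.IH[of k] True by (simp add: le_max_iff_disj)
  qed
qed

lemma length_le_max_split_if_sorted: "sorted w \<Longrightarrow> length w \<le> max_split w"
proof (induction w rule: max_split.induct)
  case (3 w)
  then have "False \<notin> set w" by auto
  then show ?case using count_list_True_eq[of w] by simp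
qed simp_all

lemma avoids_split_patterns_iff:
  "(\<forall>j \<in> {0..k}. \<not> subseq (replicate j False @ replicate (k - j) True) w) \<longleftrightarrow> max_split w < k"
  using contains_split_pattern_iff[of k w] by (auto simp: split_pattern_def)

lemma B_eq_card_max_split: "B k m = card {w. length w = m \<and> max_split w < k}"
  unfolding B_def avoids_split_patterns_iff ..

section \<open>Counting the avoiders\<close>

definition split_avoiders :: "nat \<Rightarrow> nat \<Rightarrow> nat \<Rightarrow> bool list set" where
  "split_avoiders m z k = {w. length w = m \<and> count_list w False = z \<and> max_split w < k}"

lemma finite_split_avoiders: "finite (split_avoiders m z k)"
  by (rule finite_subset[OF _ finite_lists_length_eq[of UNIV m]]) (auto simp: split_avoiders_def)

lemma split_avoiders_Suc:
  "split_avoiders (Suc m) z k =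
     Cons False ` (if 0 < z then split_avoiders m (z - 1) (k - 1) else {}) \<union>
     Cons True ` (if Suc (m - z) < k then split_avoiders m z k else {})"
proof -
  have "w \<in> split_avoiders (Suc m) z k \<longleftrightarrow>
      w \<in> Cons False ` (if 0 < z then split_avoiders m (z - 1) (k - 1) else {}) \<union>
        Cons True ` (if Suc (m - z) < k then split_avoiders m z k else {})" for w
    by (cases w rule: max_split.cases) (auto simp: split_avoiders_def count_list_True_eq)
  then show ?thesis by blast
qed

definition ballot_count :: "nat \<Rightarrow> nat \<Rightarrow> nat \<Rightarrow> int" where
  "ballot_count m z k =
     (if z \<le> m \<and> z < k \<and> m - z < k then int (m choose z) - int (m choose k) else 0)"

lemma ballot_count_Suc:
  "ballot_count (Suc m) z k =
     (if 0 < z then ballot_count m (z - 1) (k - 1) else 0) +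
     (if Suc (m - z) < k then ballot_count m z k else 0)"
proof (cases "z = 0 \<or> k = 0")
  case True
  then show ?thesis by (auto simp: ballot_count_def binomial_eq_0)
next
  case False
  then obtain z' k' where z: "z = Suc z'" and k: "k = Suc k'" by (meson not0_implies_Suc)
  have "m choose z' = m choose k'" if "m - z' = k'" "z' \<le> m"
    using that binomial_symmetric[of z' m] by simp
  then show ?thesis
    unfolding z k ballot_count_def by (auto simp: binomial_eq_0)
qed

lemma card_split_avoiders: "int (card (split_avoiders m z k)) = ballot_count m z k"
proof (induction m arbitrary: z k)
  case 0
  have "split_avoiders 0 z k = (if z = 0 \<and> 0 < k then {[]} else {})"
    by (auto simp: split_avoiders_def)
  then show ?case by (simp add: ballot_count_def)
next
  case (Suc m)
  have "card (split_avoiders (Suc m) z k) =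
      (if 0 < z then card (split_avoiders m (z - 1) (k - 1)) else 0) +
      (if Suc (m - z) < k then card (split_avoiders m z k) else 0)"
    unfolding split_avoiders_Suc
    by (subst card_Un_disjoint) (auto simp: finite_split_avoiders card_image)
  then show ?case
    using Suc.IH ballot_count_Suc[of m z k] by simp
qed

lemma B_eq_sum_ballot_count: "int (B k m) = (\<Sum>z\<le>m. ballot_count m z k)"
proof -
  have "{w. length w = m \<and> max_split w < k} = (\<Union>z\<le>m. split_avoiders m z k)"
    using count_le_length by (auto simp: split_avoiders_def)
  moreover have "split_avoiders m z k \<inter> split_avoiders m z' k = {}" if "z \<noteq> z'" for z z'
    using that by (auto simp: split_avoiders_def)
  ultimately have "B k m = (\<Sum>z\<le>m. card (split_avoiders m z k))"
    unfolding B_eq_card_max_split by (simp add: card_UN_disjoint finite_split_avoiders)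
  then show ?thesis by (simp add: card_split_avoiders)
qed

lemma B_eq_binom_sum:
  "int (B k m) = (\<Sum>a \<in> {1..2 * int k - int m - 1}. binom_int m (int k - a) - binom_int m (int k))"
proof -
  let ?Z = "{int m - int k + 1..int k - 1}"
  let ?f = "\<lambda>z. binom_int m z - binom_int m (int k)"
  have "(\<Sum>a \<in> {1..2 * int k - int m - 1}. binom_int m (int k - a) - binom_int m (int k)) =
      sum ?f ?Z"
    by (rule sum.reindex_bij_witness[of _ "\<lambda>z. int k - z" "\<lambda>a. int k - a"]) auto
  also have "\<dots> = sum ?f (?Z \<inter> {0..int m})"
    by (rule sum.mono_neutral_right) (auto simp: binom_int_def binomial_eq_0)
  also have "\<dots> = (\<Sum>z \<in> {0..int m}. if z \<in> ?Z then ?f z else 0)"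
    by (subst Int_commute, rule sum.inter_restrict) simp
  also have "\<dots> = (\<Sum>z\<le>m. if int z \<in> ?Z then ?f (int z) else 0)"
    by (rule sum.reindex_bij_witness[of _ int nat]) auto
  also have "\<dots> = (\<Sum>z\<le>m. ballot_count m z k)"
    by (rule sum.cong) (auto simp: ballot_count_def binom_int_def)
  finally show ?thesis
    by (simp add: B_eq_sum_ballot_count)
qed

section \<open>Descents and increasing subsequences\<close>

lemma length_id_perm [simp]: "length (id_perm k) = k"
  by (simp add: id_perm_def)

lemma nth_id_perm [simp]: "i < k \<Longrightarrow> id_perm k ! i = Suc i"
  by (simp add: id_perm_def nth_upt del: upt_Suc)

lemma contains_id_perm_iff:
  "contains_pattern p (id_perm k) \<longleftrightarrow> (\<exists>q. subseq q p \<and> length q = k \<and> sorted_wrt (<) q)"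
proof -
  have "(\<forall>i<k. \<forall>j<k. q ! i < q ! j \<longleftrightarrow> id_perm k ! i < id_perm k ! j) \<longleftrightarrow> sorted_wrt (<) q"
    if "length q = k" for q :: "nat list"
    using that sorted_wrt_less_nth_less_iff[of q] by (auto simp: sorted_wrt_iff_nth_less)
  then show ?thesis
    unfolding contains_pattern_def by auto
qed

lemma descents_append_subset:
  assumes "sorted_wrt (<) xs" "sorted_wrt (<) ys"
  shows "descents (xs @ ys) \<subseteq> {length xs - 1}"
proof
  fix i assume i: "i \<in> descents (xs @ ys)"
  show "i \<in> {length xs - 1}"
  proof (rule ccontr)
    assume "i \<notin> {length xs - 1}"
    then consider "Suc i < length xs" | "length xs \<le> i" by fastforce
    then show False
    proof cases
      case 1
      then show False
        using i sorted_wrt_nth_less[OF assms(1), of i "Suc i"] by (simp add: descents_def nth_append)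
    next
      case 2
      with i have "Suc (i - length xs) < length ys" by (auto simp: descents_def)
      with 2 show False
        using i sorted_wrt_nth_less[OF assms(2), of "i - length xs" "Suc (i - length xs)"]
        by (auto simp: descents_def nth_append Suc_diff_le)
    qed
  qed
qed

lemma last_mem_descents_append:
  "xs \<noteq> [] \<Longrightarrow> ys \<noteq> [] \<Longrightarrow> hd ys < last xs \<Longrightarrow> length xs - 1 \<in> descents (xs @ ys)"
  by (auto simp: descents_def nth_append last_conv_nth hd_conv_nth)

lemma grassmannian_decomposition:
  assumes "distinct p" "grassmannian p"
  obtains xs ys where "p = xs @ ys" "sorted_wrt (<) xs" "sorted_wrt (<) ys"
proof -
  have "finite (descents p)"
    by (rule finite_subset[of _ "{..<length p}"]) (auto simp: descents_def)
  then have "\<forall>a\<in>descents p. \<forall>b\<in>descents p. a = b"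
    using assms(2) card_le_Suc0_iff_eq by (auto simp: grassmannian_def)
  then obtain d where d: "descents p \<subseteq> {d}"
    by blast
  have ascent: "p ! i < p ! Suc i" if "i \<noteq> d" "Suc i < length p" for i
    using d that nth_eq_iff_index_eq[OF assms(1), of i "Suc i"] by (fastforce simp: descents_def)
  have "sorted_wrt (<) (take (Suc d) p)" "sorted_wrt (<) (drop (Suc d) p)"
    using ascent by (auto simp: sorted_wrt_iff_nth_Suc_transp)
  then show thesis
    using that[of "take (Suc d) p" "drop (Suc d) p"] by simp
qed

section \<open>Grassmannian permutations of binary words\<close>

definition zero_positions :: "bool list \<Rightarrow> nat list" where
  "zero_positions w = filter (\<lambda>v. \<not> w ! (v - 1)) [1..<Suc (length w)]"

definition one_positions :: "bool list \<Rightarrow> nat list" where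
  "one_positions w = filter (\<lambda>v. w ! (v - 1)) [1..<Suc (length w)]"

definition word_perm :: "bool list \<Rightarrow> nat list" where
  "word_perm w = zero_positions w @ one_positions w"

lemma set_zero_positions: "set (zero_positions w) = {v \<in> {1..length w}. \<not> w ! (v - 1)}"
  by (auto simp: zero_positions_def)

lemma set_one_positions: "set (one_positions w) = {v \<in> {1..length w}. w ! (v - 1)}"
  by (auto simp: one_positions_def)

lemma sorted_zero_positions: "sorted_wrt (<) (zero_positions w)"
  by (simp add: zero_positions_def sorted_wrt_filter del: upt_Suc)

lemma sorted_one_positions: "sorted_wrt (<) (one_positions w)"
  by (simp add: one_positions_def sorted_wrt_filter del: upt_Suc)

lemma map_nth_positions: "map (\<lambda>v. w ! (v - 1)) [1..<Suc (length w)] = w"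
  by (rule nth_equalityI) (simp_all del: upt_Suc)

lemma is_perm_word_perm: "is_perm (length w) (word_perm w)"
  unfolding is_perm_def word_perm_def zero_positions_def one_positions_def
  using sum_length_filter_compl[of "\<lambda>v. \<not> w ! (v - 1)" "[1..<Suc (length w)]"]
  by (auto simp del: upt_Suc)

lemma grassmannian_word_perm: "grassmannian (word_perm w)"
  using card_mono[OF _ descents_append_subset[OF sorted_zero_positions sorted_one_positions]]
  by (simp add: grassmannian_def word_perm_def)

lemma descents_word_perm:
  assumes "\<not> sorted w"
  shows "descents (word_perm w) = {length (zero_positions w) - 1}"
    and "zero_positions w \<noteq> []"
proof -
  obtain i j where ij: "i < j" "j < length w" "w ! i" "\<not> w ! j"
    using assms unfolding sorted_iff_nth_mono by (auto simp: le_bool_def le_less)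
  then have zero: "Suc j \<in> set (zero_positions w)" and one: "Suc i \<in> set (one_positions w)"
    by (auto simp: set_zero_positions set_one_positions)
  then show nonempty: "zero_positions w \<noteq> []" by auto
  have "hd (one_positions w) < last (zero_positions w)"
    using sorted_hd_le[OF _ one] sorted_le_last[OF _ zero] ij(1)
      sorted_zero_positions[of w] sorted_one_positions[of w]
    by (simp add: strict_sorted_iff)
  then have "length (zero_positions w) - 1 \<in> descents (word_perm w)"
    unfolding word_perm_def using nonempty one by (intro last_mem_descents_append) auto
  then show "descents (word_perm w) = {length (zero_positions w) - 1}"
    using descents_append_subset[OF sorted_zero_positions sorted_one_positions, of w]
    by (auto simp: word_perm_def)
qed

lemma word_perm_inj:
  assumes "\<not> sorted w" "\<not> sorted w'" "length w = length w'" "word_perm w = word_perm w'"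
  shows "w = w'"
proof -
  have "length (zero_positions w) = length (zero_positions w')"
    using descents_word_perm[OF assms(1)] descents_word_perm[OF assms(2)] assms(4)
    by (metis One_nat_def Suc_pred length_greater_0_conv singleton_inject)
  then have "zero_positions w = zero_positions w'"
    using assms(4) unfolding word_perm_def by simp
  then have zeros: "set (zero_positions w) = set (zero_positions w')" by simp
  show ?thesis
  proof (rule nth_equalityI)
    fix i assume i: "i < length w"
    have "Suc i \<in> set (zero_positions w) \<longleftrightarrow> Suc i \<in> set (zero_positions w')"
      using zeros by simp
    then show "w ! i = w' ! i"
      using i assms(3) by (simp add: set_zero_positions)
  qed (rule assms(3))
qed

lemma split_pattern_of_increasing_subseq:
  assumes "subseq q (word_perm w)" "sorted_wrt (<) q"
  shows "\<exists>j\<le>length q. subseq (split_pattern j (length q)) w"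
proof -
  let ?letter = "\<lambda>v. w ! (v - 1)"
  let ?U = "[1..<Suc (length w)]"
  obtain q0 q1 where q01: "q = q0 @ q1" "subseq q0 (zero_positions w)" "subseq q1 (one_positions w)"
    using assms(1) unfolding word_perm_def by (auto elim: subseq_appendE)
  have "set q \<subseteq> set ?U"
    using set_mono_subseq[OF assms(1)] by (auto simp: word_perm_def zero_positions_def one_positions_def)
  then have "subseq (map ?letter q) (map ?letter ?U)"
    using subseq_map[OF sorted_subset_imp_subseq[OF _ assms(2)], of ?U ?letter] by (simp del: upt_Suc)
  then have "subseq (map ?letter q) w"
    by (simp only: map_nth_positions)
  moreover have "map ?letter q = split_pattern (length q0) (length q)"
    using q01 set_mono_subseq[OF q01(2)] set_mono_subseq[OF q01(3)]
    by (auto simp: split_pattern_def map_eq_replicate_iff set_zero_positions set_one_positions)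
  ultimately show ?thesis
    using q01(1) by (intro exI[of _ "length q0"]) auto
qed

lemma increasing_subseq_of_split_pattern:
  assumes "j \<le> k" "subseq (split_pattern j k) w"
  shows "\<exists>q. subseq q (word_perm w) \<and> length q = k \<and> sorted_wrt (<) q"
proof -
  let ?letter = "\<lambda>v. w ! (v - 1)"
  let ?U = "[1..<Suc (length w)]"
  obtain N where "split_pattern j k = nths (map ?letter ?U) N"
    using assms(2) unfolding subseq_conv_nths map_nth_positions by blast
  then obtain zs where zs: "subseq zs ?U" "map ?letter zs = split_pattern j k"
    by (metis nths_map subseq_conv_nths)
  have "sorted_wrt (<) zs"
    using zs(1) unfolding subseq_conv_nths by (auto simp: strict_sorted_iff sorted_nths simp del: upt_Suc)
  moreover have len: "length zs = k"
    using arg_cong[OF zs(2), of length] assms(1) by (simp add: split_pattern_def)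
  moreover have "subseq (take j zs) (zero_positions w)"
  proof -
    have "\<forall>v\<in>set (take j zs). \<not> ?letter v"
      using zs(2) assms(1) len map_eq_replicate_iff[of ?letter "take j zs" False]
      by (simp add: split_pattern_def flip: take_map)
    moreover have "subseq (take j zs) ?U"
      using zs(1) prefix_imp_subseq[OF take_is_prefix] by (rule subseq_order.order_trans[rotated])
    ultimately show ?thesis
      unfolding zero_positions_def by (rule subseq_filter_if_all)
  qed
  moreover have "subseq (drop j zs) (one_positions w)"
  proof -
    have "\<forall>v\<in>set (drop j zs). ?letter v"
      using zs(2) assms(1) len map_eq_replicate_iff[of ?letter "drop j zs" True]
      by (simp add: split_pattern_def flip: drop_map)
    moreover have "subseq (drop j zs) ?U"
      using zs(1) suffix_imp_subseq[OF suffix_drop] by (rule subseq_order.order_trans[rotated])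
    ultimately show ?thesis
      unfolding one_positions_def by (rule subseq_filter_if_all)
  qed
  ultimately show ?thesis
    unfolding word_perm_def by (metis append_take_drop_id list_emb_append_mono)
qed

lemma contains_id_perm_word_perm_iff:
  "contains_pattern (word_perm w) (id_perm k) \<longleftrightarrow> k \<le> max_split w"
  unfolding contains_id_perm_iff contains_split_pattern_iff[symmetric]
  using split_pattern_of_increasing_subseq increasing_subseq_of_split_pattern by blast

lemma avoids_id_perm_word_perm_iff: "avoids (word_perm w) (id_perm k) \<longleftrightarrow> max_split w < k"
  by (simp add: avoids_def contains_id_perm_word_perm_iff not_le)

lemma word_perm_sorted_append:
  assumes "distinct (xs @ ys)" "set (xs @ ys) = {1..m}" "sorted_wrt (<) xs" "sorted_wrt (<) ys"
  shows "word_perm (map (\<lambda>v. v \<in> set ys) [1..<Suc m]) = xs @ ys"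
proof -
  let ?w = "map (\<lambda>v. v \<in> set ys) [1..<Suc m]"
  have letter: "?w ! (v - 1) \<longleftrightarrow> v \<in> set ys" if "v \<in> {1..m}" for v
    using that by (auto simp: nth_upt simp del: upt_Suc)
  have "set (zero_positions ?w) = {1..m} - set ys" "set (one_positions ?w) = {1..m} \<inter> set ys"
    using letter by (auto simp: set_zero_positions set_one_positions simp del: upt_Suc)
  then have "set (zero_positions ?w) = set xs" "set (one_positions ?w) = set ys"
    using assms(1,2) by auto
  then have "zero_positions ?w = xs" "one_positions ?w = ys"
    using assms(1,3,4) sorted_zero_positions sorted_one_positions
    by (auto simp: strict_sorted_iff intro: sorted_distinct_set_unique)
  then show ?thesis
    by (simp add: word_perm_def)
qed

lemma grassmannian_perm_eq_word_perm:
  assumes "is_perm m p" "grassmannian p"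
  obtains w where "length w = m" "p = word_perm w"
proof -
  obtain xs ys where "p = xs @ ys" "sorted_wrt (<) xs" "sorted_wrt (<) ys"
    using assms unfolding is_perm_def by (metis grassmannian_decomposition)
  then show thesis
    using assms(1) word_perm_sorted_append[of xs ys m] that[of "map (\<lambda>v. v \<in> set ys) [1..<Suc m]"]
    unfolding is_perm_def by (simp del: upt_Suc)
qed

lemma card_grassmannian_avoiders:
  assumes "k \<le> m"
  shows "card {p. is_perm m p \<and> grassmannian p \<and> avoids p (id_perm k)} = B k m"
proof -
  let ?W = "{w. length w = m \<and> max_split w < k}"
  have "{p. is_perm m p \<and> grassmannian p \<and> avoids p (id_perm k)} = word_perm ` ?W"
    using is_perm_word_perm grassmannian_word_perm avoids_id_perm_word_perm_iff
    by (auto elim!: grassmannian_perm_eq_word_perm)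
  moreover have "inj_on word_perm ?W"
  proof (rule inj_onI)
    fix w w' assume "w \<in> ?W" "w' \<in> ?W" "word_perm w = word_perm w'"
    then show "w = w'"
      using assms length_le_max_split_if_sorted[of w] length_le_max_split_if_sorted[of w']
      by (intro word_perm_inj) auto
  qed
  ultimately show ?thesis
    by (simp add: B_eq_card_max_split card_image)
qed

theorem mainTheorem7:
  shows "(\<forall>k m :: nat. k \<ge> 1 \<longrightarrow> m \<ge> 1 \<longrightarrow>
            int (B k m) = (\<Sum>a \<in> {1..2 * int k - int m - 1}.
                              binom_int m (int k - a) - binom_int m (int k)))
       \<and> (\<forall>k m :: nat. 2 \<le> k \<longrightarrow> k \<le> m \<longrightarrow>
            int (card {p. is_perm m p \<and> grassmannian p \<and> avoids p (id_perm k)}) =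
              (\<Sum>a \<in> {1..2 * int k - int m - 1}.
                  binom_int m (int k - a) - binom_int m (int k)))"
  using B_eq_binom_sum card_grassmannian_avoiders by auto

end
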